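(* Let $\rho$ be a density matrix on $\mathbb{C}^d$ with spectral decomposition $\rho=\sum_{i=1}^d p_i|i\rangle\langle i|$ (eigenvalues listed with multiplicity, including zeros), and $H$ a Hermitian operator on $\mathbb{C}^d$. Let $S=\{p_i+p_j:p_i\neq p_j\}$ and $$J=\{\mu\in S:\ \langle i|H|j\rangle=0\ \text{for all } i,j \text{ with } p_i\neq p_j \text{ and } p_i+p_j=\mu\}.$$ Then $n^*=\mathcal{N}[S]-\mathcal{N}[J]$, where $\mathcal{N}[\cdot]$ denotes the number of distinct elements of a set.
   Context: Let $\mathcal{R}_\rho(X)=\frac12(\rho X+X\rho)$ and define the Krylov subspaces $\mathcal{K}_n=\mathrm{span}\{i[\rho,H],\mathcal{R}_\rho(i[\rho,H]),\dots,\mathcal{R}_\rho^{n-1}(i[\rho,H])\}$ for $n\ge1$. These are nested and eventually stabilize; $n^*$ denotes the dimension of the stabilized subspace $\bigcup_n\mathcal{K}_n$. Equivalently, when $i[\rho,H]\ne0$, $\dim\mathcal{K}_n=n$ for $n\le n^*$ and $n^*$ is the smallest $n$ with $\mathcal{K}_n=\mathcal{K}_{n+1}$. *)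

theory Defs
  imports "HOL-Analysis.Analysis"
begin

text \<open>Operators on C^d are d x d complex matrices, d = CARD('n).
  The space of such matrices is regarded as a real vector space; the Krylov
  subspaces consist of Hermitian operators, and their real and complex dimensions agree.\<close>

definition cinner :: "complex^'n \<Rightarrow> complex^'n \<Rightarrow> complex" where
  "cinner v w = (\<Sum>a\<in>UNIV. cnj (v$a) * w$a)"

definition adjoint_mat :: "complex^'n^'n \<Rightarrow> complex^'n^'n" where
  "adjoint_mat A = (\<chi> a b. cnj (A$b$a))"

definition hermitian :: "complex^'n^'n \<Rightarrow> bool" where
  "hermitian A \<longleftrightarrow> adjoint_mat A = A"

definition density_matrix :: "complex^'n^'n \<Rightarrow> bool" where
  "density_matrix \<rho> \<longleftrightarrow> hermitian \<rho> \<and>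
     (\<forall>v. 0 \<le> Re (cinner v (\<rho> *v v))) \<and> (\<Sum>a\<in>UNIV. \<rho>$a$a) = 1"

definition orthonormal_family :: "('n \<Rightarrow> complex^'n) \<Rightarrow> bool" where
  "orthonormal_family e \<longleftrightarrow> (\<forall>i j. cinner (e i) (e j) = (if i = j then 1 else 0))"

definition outer :: "complex^'n \<Rightarrow> complex^'n \<Rightarrow> complex^'n^'n" where
  "outer v w = (\<chi> a b. v$a * cnj (w$b))"

definition cscale :: "complex \<Rightarrow> complex^'n^'n \<Rightarrow> complex^'n^'n" where
  "cscale c M = (\<chi> a b. c * M$a$b)"

definition melem :: "complex^'n^'n \<Rightarrow> ('n \<Rightarrow> complex^'n) \<Rightarrow> 'n \<Rightarrow> 'n \<Rightarrow> complex" where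
  "melem H e i j = cinner (e i) (H *v e j)"

definition Rop :: "complex^'n^'n \<Rightarrow> complex^'n^'n \<Rightarrow> complex^'n^'n" where
  "Rop \<rho> X = (1/2::real) *\<^sub>R (\<rho> ** X + X ** \<rho>)"

definition icomm :: "complex^'n^'n \<Rightarrow> complex^'n^'n \<Rightarrow> complex^'n^'n" where
  "icomm \<rho> H = cscale \<i> (\<rho> ** H - H ** \<rho>)"

definition krylov :: "complex^'n^'n \<Rightarrow> complex^'n^'n \<Rightarrow> nat \<Rightarrow> (complex^'n^'n) set" where
  "krylov \<rho> H n = span {(Rop \<rho> ^^ k) (icomm \<rho> H) | k. k < n}"

definition nstar :: "complex^'n^'n \<Rightarrow> complex^'n^'n \<Rightarrow> nat" where
  "nstar \<rho> H = dim (\<Union>n\<in>{1..}. krylov \<rho> H n)"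

end

theory Submission
  imports Defs "HOL-Computational_Algebra.Polynomial"
begin

(* In the eigenbasis of rho, the map R_rho multiplies the (i, j) entry of a matrix by
   (p_i + p_j)/2, and i[rho, H] has entries i (p_i - p_j) <i|H|j>. So the stabilised Krylov space is
   the cyclic space of a diagonal operator at a matrix Y. Split Y into its parts on the level sets
   of (p_i + p_j)/2: every power of the operator applied to Y is a combination of these parts, and
   conversely each part is a Lagrange interpolation polynomial of the operator applied to Y.
   The parts have disjoint supports, hence are independent, so n^* is the number of values
   p_i + p_j with p_i ~= p_j carried by some nonzero <i|H|j>, i.e. the number of elements of S - J. *)

lemma UN_span_prefixes_eq_span_range:
  fixes g :: "nat \<Rightarrow> 'a::real_vector"
  shows "(\<Union>n\<in>{1..}. span {g k | k. k < n}) = span (range g)"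
proof
  show "(\<Union>n\<in>{1..}. span {g k | k. k < n}) \<subseteq> span (range g)"
    by (intro UN_least span_mono) auto
  show "span (range g) \<subseteq> (\<Union>n\<in>{1..}. span {g k | k. k < n})"
  proof
    fix v assume "v \<in> span (range g)"
    then obtain S u where S: "finite S" "S \<subseteq> range g" and v: "v = (\<Sum>x\<in>S. u x *\<^sub>R x)"
      by (auto simp: span_explicit)
    then obtain K where K: "finite K" "S = g ` K"
      by (meson finite_subset_image)
    define n where "n = Suc (Max (insert 0 K))"
    have "S \<subseteq> {g k | k. k < n}"
      using K by (auto simp: n_def less_Suc_eq_le)
    then have "v \<in> span {g k | k. k < n}"
      unfolding v by (intro span_sum span_scale) (auto intro: span_base)
    then show "v \<in> (\<Union>n\<in>{1..}. span {g k | k. k < n})"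
      by (auto simp: n_def)
  qed
qed

lemma span_orbit_intertwined:
  assumes "linear f" and "\<And>x. f (R x) = T (f x)"
  shows "f ` span (range (\<lambda>k. (R ^^ k) x)) = span (range (\<lambda>k. (T ^^ k) (f x)))"
proof -
  have "f ((R ^^ k) x) = (T ^^ k) (f x)" for k
    by (induction k) (simp_all add: assms(2))
  then have "f ` range (\<lambda>k. (R ^^ k) x) = range (\<lambda>k. (T ^^ k) (f x))"
    by (simp add: image_image)
  then show ?thesis
    by (metis span_linear_image[OF assms(1)])
qed

definition entrywise_scale :: "('n \<Rightarrow> 'm \<Rightarrow> real) \<Rightarrow> 'a::real_vector^'m^'n \<Rightarrow> 'a^'m^'n" where
  "entrywise_scale l X = (\<chi> a b. l a b *\<^sub>R X$a$b)"

definition level_part :: "('n \<Rightarrow> 'm \<Rightarrow> real) \<Rightarrow> 'a::real_vector^'m^'n \<Rightarrow> real \<Rightarrow> 'a^'m^'n" where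
  "level_part l Y \<mu> = (\<chi> a b. if l a b = \<mu> then Y$a$b else 0)"

definition support_values :: "('n \<Rightarrow> 'm \<Rightarrow> real) \<Rightarrow> 'a::real_vector^'m^'n \<Rightarrow> real set" where
  "support_values l Y = {l a b | a b. Y$a$b \<noteq> 0}"

lemma finite_support_values [simp]: "finite (support_values l Y)"
proof -
  have "support_values l Y \<subseteq> (\<lambda>(a, b). l a b) ` UNIV"
    by (auto simp: support_values_def)
  then show ?thesis
    by (rule finite_subset) simp
qed

lemma funpow_entrywise_scale:
  "(entrywise_scale l ^^ k) Y = entrywise_scale (\<lambda>a b. l a b ^ k) Y"
  by (induction k) (simp_all add: entrywise_scale_def vec_eq_iff)

lemma entrywise_scale_poly_in_span_orbit:
  "entrywise_scale (\<lambda>a b. poly q (l a b)) Y \<in> span (range (\<lambda>k. (entrywise_scale l ^^ k) Y))"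
proof -
  have "entrywise_scale (\<lambda>a b. poly q (l a b)) Y
      = (\<Sum>i\<le>degree q. coeff q i *\<^sub>R (entrywise_scale l ^^ i) Y)"
    by (simp add: funpow_entrywise_scale entrywise_scale_def vec_eq_iff sum_component
        poly_altdef scaleR_sum_left)
  also have "\<dots> \<in> span (range (\<lambda>k. (entrywise_scale l ^^ k) Y))"
    by (intro span_sum span_scale) (simp add: span_base)
  finally show ?thesis .
qed

lemma level_part_in_span_orbit:
  "level_part l Y \<mu> \<in> span (range (\<lambda>k. (entrywise_scale l ^^ k) Y))"
proof -
  define N where "N = support_values l Y - {\<mu>}"
  \<comment> \<open>the Lagrange polynomial that is 1 at \<mu> and 0 at the other support values\<close>
  define q where "q = smult (inverse (\<Prod>\<nu>\<in>N. \<mu> - \<nu>)) (\<Prod>\<nu>\<in>N. [:- \<nu>, 1:])"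
  have q: "poly q (l a b) = (if l a b = \<mu> then 1 else 0)" if "Y$a$b \<noteq> 0" for a b
  proof -
    have "l a b \<in> support_values l Y"
      using that by (auto simp: support_values_def)
    moreover have "(\<Prod>\<nu>\<in>N. \<mu> - \<nu>) \<noteq> 0"
      by (simp add: N_def)
    ultimately show ?thesis
      by (auto simp: q_def N_def poly_prod)
  qed
  have "(if l a b = \<mu> then Y$a$b else 0) = poly q (l a b) *\<^sub>R Y$a$b" for a b
    by (cases "Y$a$b = 0") (simp_all add: q)
  then have "level_part l Y \<mu> = entrywise_scale (\<lambda>a b. poly q (l a b)) Y"
    by (simp add: level_part_def entrywise_scale_def vec_eq_iff)
  then show ?thesis
    by (simp add: entrywise_scale_poly_in_span_orbit)
qed

lemma entrywise_scale_eq_sum_level_parts: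
  "entrywise_scale (\<lambda>a b. f (l a b)) Y = (\<Sum>\<mu>\<in>support_values l Y. f \<mu> *\<^sub>R level_part l Y \<mu>)"
proof -
  have "(\<Sum>\<mu>\<in>support_values l Y. f \<mu> *\<^sub>R (if l a b = \<mu> then Y$a$b else 0))
      = (if l a b \<in> support_values l Y then f (l a b) *\<^sub>R Y$a$b else 0)" for a b
    by (simp add: if_distrib[of "scaleR _"] eq_commute[of "l a b"] sum.delta cong: if_cong)
  moreover have "Y$a$b \<noteq> 0 \<Longrightarrow> l a b \<in> support_values l Y" for a b
    by (auto simp: support_values_def)
  ultimately show ?thesis
    by (auto simp: entrywise_scale_def level_part_def vec_eq_iff sum_component)
qed

lemma span_orbit_entrywise_scale:
  "span (range (\<lambda>k. (entrywise_scale l ^^ k) Y)) = span (level_part l Y ` support_values l Y)"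
proof (rule span_eq[THEN iffD2, OF conjI])
  show "range (\<lambda>k. (entrywise_scale l ^^ k) Y) \<subseteq> span (level_part l Y ` support_values l Y)"
  proof clarify
    fix k
    show "(entrywise_scale l ^^ k) Y \<in> span (level_part l Y ` support_values l Y)"
      unfolding funpow_entrywise_scale entrywise_scale_eq_sum_level_parts[of "\<lambda>x. x ^ k"]
      by (intro span_sum span_scale) (simp add: span_base)
  qed
  show "level_part l Y ` support_values l Y \<subseteq> span (range (\<lambda>k. (entrywise_scale l ^^ k) Y))"
    using level_part_in_span_orbit by blast
qed

lemma level_part_nth_ne_zero:
  assumes "\<mu> \<in> support_values l Y"
  obtains a b where "l a b = \<mu>" and "level_part l Y \<mu> $ a $ b \<noteq> 0"
  using assms by (auto simp: support_values_def level_part_def)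

lemma inj_on_level_part: "inj_on (level_part l Y) (support_values l Y)"
proof
  fix \<mu> \<nu> assume "\<mu> \<in> support_values l Y" and eq: "level_part l Y \<mu> = level_part l Y \<nu>"
  from \<open>\<mu> \<in> support_values l Y\<close> obtain a b
    where "l a b = \<mu>" and "level_part l Y \<mu> $ a $ b \<noteq> 0"
    by (rule level_part_nth_ne_zero)
  moreover from this have "level_part l Y \<nu> $ a $ b \<noteq> 0"
    by (simp add: eq)
  ultimately show "\<mu> = \<nu>"
    by (simp add: level_part_def split: if_splits)
qed

lemma independent_level_parts:
  fixes Y :: "'a::real_inner^'m^'n"
  shows "independent (level_part l Y ` support_values l Y)"
proof (rule pairwise_orthogonal_independent)
  have "orthogonal (level_part l Y \<mu>) (level_part l Y \<nu>)" if "\<mu> \<noteq> \<nu>" for \<mu> \<nu>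
  proof -
    have "(if l a b = \<mu> then Y$a$b else 0) \<bullet> (if l a b = \<nu> then Y$a$b else 0) = 0" for a b
      using that by simp
    then show ?thesis
      by (simp add: orthogonal_def inner_vec_def level_part_def)
  qed
  then show "pairwise orthogonal (level_part l Y ` support_values l Y)"
    by (intro pairwise_imageI) blast
  show "0 \<notin> level_part l Y ` support_values l Y"
  proof
    assume "0 \<in> level_part l Y ` support_values l Y"
    then obtain \<mu> where "\<mu> \<in> support_values l Y" and "level_part l Y \<mu> = 0"
      by auto
    then show False
      by (auto elim: level_part_nth_ne_zero)
  qed
qed

lemma dim_span_orbit_entrywise_scale:
  fixes Y :: "'a::real_inner^'m^'n"
  shows "dim (span (range (\<lambda>k. (entrywise_scale l ^^ k) Y))) = card (support_values l Y)"
  unfolding span_orbit_entrywise_scale dim_span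
  by (simp add: dim_eq_card_independent[OF independent_level_parts] card_image[OF inj_on_level_part])

definition column_matrix :: "('n \<Rightarrow> 'a^'m) \<Rightarrow> 'a^'n^'m" where
  "column_matrix e = (\<chi> a i. e i $ a)"

lemma column_matrix_nth [simp]: "column_matrix e $ a $ i = e i $ a"
  by (simp add: column_matrix_def)

definition diag_mat :: "('n \<Rightarrow> 'a::zero) \<Rightarrow> 'a^'n^'n" where
  "diag_mat d = (\<chi> i j. if i = j then d i else 0)"

lemma diag_mat_mult_nth: "(diag_mat d ** A) $ i $ j = d i * A $ i $ j"
  by (simp add: diag_mat_def matrix_matrix_mult_def if_distrib if_distribR sum.delta cong: if_cong)

lemma mult_diag_mat_nth: "(A ** diag_mat d) $ i $ j = A $ i $ j * d j"
  by (simp add: diag_mat_def matrix_matrix_mult_def if_distrib if_distribR sum.delta' cong: if_cong)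

lemma adjoint_column_matrix_mult_self:
  assumes "orthonormal_family e"
  shows "adjoint_mat (column_matrix e) ** column_matrix e = mat 1"
  using assms by (simp add: column_matrix_def adjoint_mat_def matrix_matrix_mult_def mat_def
      vec_eq_iff orthonormal_family_def cinner_def)

lemma column_matrix_mult_adjoint_self:
  assumes "orthonormal_family e"
  shows "column_matrix e ** adjoint_mat (column_matrix e) = mat 1"
  using adjoint_column_matrix_mult_self[OF assms] matrix_left_right_inverse by blast

lemma sum_outer_eq_column_matrix_diag:
  "(\<Sum>i\<in>UNIV. cscale (d i) (outer (e i) (e i)))
    = column_matrix e ** diag_mat d ** adjoint_mat (column_matrix e)"
proof -
  have "(column_matrix e ** diag_mat d) $ a $ i = e i $ a * d i" for a i
    by (simp add: mult_diag_mat_nth)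
  then show ?thesis
    by (simp add: vec_eq_iff sum_component cscale_def outer_def adjoint_mat_def
        matrix_matrix_mult_def[of "column_matrix e ** diag_mat d"] mult_ac)
qed

definition in_basis :: "('n \<Rightarrow> complex^'n) \<Rightarrow> complex^'n^'n \<Rightarrow> complex^'n^'n" where
  "in_basis e X = adjoint_mat (column_matrix e) ** X ** column_matrix e"

lemma in_basis_nth: "in_basis e X $ a $ b = melem X e a b"
  unfolding in_basis_def melem_def cinner_def
  by (simp add: matrix_matrix_mult_def matrix_vector_mult_def adjoint_mat_def column_matrix_def
      sum_distrib_left sum_distrib_right mult_ac) (rule sum.swap)

lemma linear_in_basis: "linear (in_basis e)"
proof (rule linearI)
  show "in_basis e (X + Z) = in_basis e X + in_basis e Z" for X Z
    by (simp add: in_basis_def matrix_matrix_mult_def vec_eq_iff sum.distrib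
        distrib_left distrib_right)
  show "in_basis e (r *\<^sub>R X) = r *\<^sub>R in_basis e X" for r X
    by (simp add: in_basis_def matrix_scalar_ac scalar_matrix_assoc)
qed

lemma in_basis_cscale: "in_basis e (cscale c X) = cscale c (in_basis e X)"
  by (simp add: in_basis_def cscale_def matrix_matrix_mult_def vec_eq_iff sum_distrib_left mult_ac)

lemma in_basis_mult:
  assumes "orthonormal_family e"
  shows "in_basis e (A ** B) = in_basis e A ** in_basis e B"
proof -
  have "A ** B = A ** (column_matrix e ** adjoint_mat (column_matrix e)) ** B"
    by (simp add: column_matrix_mult_adjoint_self[OF assms])
  then show ?thesis
    by (simp add: in_basis_def matrix_mul_assoc)
qed

lemma column_matrix_conj_in_basis:
  assumes "orthonormal_family e"
  shows "column_matrix e ** in_basis e X ** adjoint_mat (column_matrix e) = X"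
proof -
  let ?U = "column_matrix e"
  have "?U ** in_basis e X ** adjoint_mat ?U = (?U ** adjoint_mat ?U) ** X ** (?U ** adjoint_mat ?U)"
    by (simp add: in_basis_def matrix_mul_assoc)
  then show ?thesis
    by (simp add: column_matrix_mult_adjoint_self[OF assms])
qed

lemma inj_in_basis:
  assumes "orthonormal_family e"
  shows "inj (in_basis e)"
  by (rule injI) (metis column_matrix_conj_in_basis[OF assms])

lemma in_basis_sum_outer:
  assumes "orthonormal_family e"
  shows "in_basis e (\<Sum>i\<in>UNIV. cscale (d i) (outer (e i) (e i))) = diag_mat d"
proof -
  let ?U = "column_matrix e"
  have "in_basis e (?U ** diag_mat d ** adjoint_mat ?U)
      = (adjoint_mat ?U ** ?U) ** diag_mat d ** (adjoint_mat ?U ** ?U)"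
    by (simp add: in_basis_def matrix_mul_assoc)
  then show ?thesis
    by (simp add: sum_outer_eq_column_matrix_diag adjoint_column_matrix_mult_self[OF assms])
qed

lemma in_basis_Rop:
  assumes e: "orthonormal_family e"
    and \<rho>: "\<rho> = (\<Sum>i\<in>UNIV. cscale (complex_of_real (p i)) (outer (e i) (e i)))"
  shows "in_basis e (Rop \<rho> X) = entrywise_scale (\<lambda>a b. (p a + p b) / 2) (in_basis e X)"
proof -
  let ?D = "diag_mat (\<lambda>i. complex_of_real (p i))"
  have "in_basis e (Rop \<rho> X) = (1/2::real) *\<^sub>R (?D ** in_basis e X + in_basis e X ** ?D)"
    by (simp add: Rop_def linear_scale[OF linear_in_basis] linear_add[OF linear_in_basis]
        in_basis_mult[OF e] in_basis_sum_outer[OF e] \<rho>)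
  then show ?thesis
    by (simp add: vec_eq_iff entrywise_scale_def diag_mat_mult_nth mult_diag_mat_nth)
      (simp add: scaleR_conv_of_real algebra_simps)
qed

lemma in_basis_icomm_nth:
  assumes e: "orthonormal_family e"
    and \<rho>: "\<rho> = (\<Sum>i\<in>UNIV. cscale (complex_of_real (p i)) (outer (e i) (e i)))"
  shows "in_basis e (icomm \<rho> H) $ a $ b = \<i> * complex_of_real (p a - p b) * melem H e a b"
proof -
  let ?D = "diag_mat (\<lambda>i. complex_of_real (p i))"
  have "in_basis e (icomm \<rho> H) = cscale \<i> (?D ** in_basis e H - in_basis e H ** ?D)"
    by (simp add: icomm_def in_basis_cscale linear_diff[OF linear_in_basis]
        in_basis_mult[OF e] in_basis_sum_outer[OF e] \<rho>)
  then show ?thesis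
    by (simp add: cscale_def diag_mat_mult_nth mult_diag_mat_nth in_basis_nth algebra_simps)
qed

lemma nstar_eq_card_nonvanishing_sums:
  assumes e: "orthonormal_family e"
    and \<rho>: "\<rho> = (\<Sum>i\<in>UNIV. cscale (complex_of_real (p i)) (outer (e i) (e i)))"
  shows "nstar \<rho> H = card {p i + p j | i j. p i \<noteq> p j \<and> melem H e i j \<noteq> 0}"
proof -
  let ?orbit = "\<lambda>k. (Rop \<rho> ^^ k) (icomm \<rho> H)"
  let ?l = "\<lambda>a b. (p a + p b) / 2"
  let ?Y = "in_basis e (icomm \<rho> H)"
  have "nstar \<rho> H = dim (span (range ?orbit))"
    unfolding nstar_def krylov_def by (rule arg_cong[OF UN_span_prefixes_eq_span_range])
  also have "\<dots> = dim (in_basis e ` span (range ?orbit))"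
    using inj_in_basis[OF e]
    by (intro dim_image_eq[symmetric] linear_in_basis) (simp add: inj_on_def inj_def)
  also have "in_basis e ` span (range ?orbit) = span (range (\<lambda>k. (entrywise_scale ?l ^^ k) ?Y))"
    by (rule span_orbit_intertwined) (simp_all add: linear_in_basis in_basis_Rop[OF e \<rho>])
  also have "dim \<dots> = card (support_values ?l ?Y)"
    by (rule dim_span_orbit_entrywise_scale)
  also have "support_values ?l ?Y = (\<lambda>\<mu>. \<mu> / 2) ` {p i + p j | i j. p i \<noteq> p j \<and> melem H e i j \<noteq> 0}"
  proof -
    have "?Y $ a $ b \<noteq> 0 \<longleftrightarrow> p a \<noteq> p b \<and> melem H e a b \<noteq> 0" for a b
      by (simp add: in_basis_icomm_nth[OF e \<rho>])
    then show ?thesis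
      unfolding support_values_def by blast
  qed
  also have "card \<dots> = card {p i + p j | i j. p i \<noteq> p j \<and> melem H e i j \<noteq> 0}"
    by (rule card_image) (simp add: inj_on_def)
  finally show ?thesis .
qed

theorem mainTheorem3:
  fixes \<rho> H :: "complex^'n^'n" and p :: "'n \<Rightarrow> real" and e :: "'n \<Rightarrow> complex^'n"
  assumes "density_matrix \<rho>"
    and "hermitian H"
    and "orthonormal_family e"
    and "\<rho> = (\<Sum>i\<in>UNIV. cscale (complex_of_real (p i)) (outer (e i) (e i)))"
  shows "nstar \<rho> H =
    card {p i + p j | i j. p i \<noteq> p j}
    - card {\<mu> \<in> {p i + p j | i j. p i \<noteq> p j}.
              \<forall>i j. p i \<noteq> p j \<and> p i + p j = \<mu> \<longrightarrow> melem H e i j = 0}"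
proof -
  define S where "S = {p i + p j | i j. p i \<noteq> p j}"
  define J where "J = {\<mu> \<in> S. \<forall>i j. p i \<noteq> p j \<and> p i + p j = \<mu> \<longrightarrow> melem H e i j = 0}"
  have "finite S"
    unfolding S_def by (rule finite_subset[of _ "(\<lambda>(i, j). p i + p j) ` UNIV"]) auto
  have "J \<subseteq> S"
    by (auto simp: J_def)
  have "{p i + p j | i j. p i \<noteq> p j \<and> melem H e i j \<noteq> 0} = S - J"
    by (auto simp: S_def J_def) metis
  then have "nstar \<rho> H = card (S - J)"
    by (simp add: nstar_eq_card_nonvanishing_sums[OF assms(3,4)])
  also have "\<dots> = card S - card J"
    using \<open>finite S\<close> \<open>J \<subseteq> S\<close> by (simp add: card_Diff_subset finite_subset)
  finally show ?thesis
    unfolding S_def J_def .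
qed

end
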